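(* In the 3-body problem in ${\bf S}^2$ with equal masses $m_1=m_2=m_3=m$, for every $m>0$ and every $z\in(-1/2,0)\cup(0,1)$ there exist $\omega>0$ and $\omega<0$ such that ${\bf q}_1(t)=(0,0,1)$, ${\bf q}_2(t)=(r\cos\omega t, r\sin\omega t, z)$, ${\bf q}_3(t)=(-r\cos\omega t,-r\sin\omega t,z)$, with $r=(1-z^2)^{1/2}$, is a solution of the equations of motion (an elliptic relative equilibrium); the condition on $\omega$ is $\frac{4z+|z|^{-1}}{4z^2(1-z^2)^{3/2}}=\frac{\omega^2}{m}$.
   Context: The $n$-body problem in ${\bf S}^2$: bodies of masses $m_1,\dots,m_n>0$ have positions ${\bf q}_i=(x_i,y_i,z_i)\in\mathbb R^3$ on the unit sphere ${\bf S}^2=\{{\bf q}:{\bf q}\cdot{\bf q}=1\}$ ($\cdot$ the Euclidean inner product), and satisfy $$\ddot{\bf q}_i=\sum_{j\ne i}\frac{m_j[{\bf q}_j-({\bf q}_i\cdot{\bf q}_j){\bf q}_i]}{[1-({\bf q}_i\cdot{\bf q}_j)^2]^{3/2}}-(\dot{\bf q}_i\cdot\dot{\bf q}_i){\bf q}_i,\qquad {\bf q}_i\cdot{\bf q}_i=1,\ \ {\bf q}_i\cdot\dot{\bf q}_i=0,$$ $i=1,\dots,n$, defined only for configurations with $({\bf q}_i\cdot{\bf q}_j)^2\ne 1$ for all $i\ne j$. *)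

theory Defs
  imports "HOL-Analysis.Analysis"
begin

text \<open>Bodies are indexed 0,...,n-1. Positions q i t in R^3 (type real^3).\<close>
definition S2_accel :: "nat \<Rightarrow> (nat \<Rightarrow> real) \<Rightarrow> (nat \<Rightarrow> real^3) \<Rightarrow> (nat \<Rightarrow> real^3) \<Rightarrow> nat \<Rightarrow> real^3" where
  "S2_accel n m q v i =
     (\<Sum>j\<in>{..<n} - {i}. (m j / (1 - (q i \<bullet> q j)\<^sup>2) powr (3/2)) *\<^sub>R (q j - (q i \<bullet> q j) *\<^sub>R q i))
     - (v i \<bullet> v i) *\<^sub>R q i"

definition is_S2_solution :: "nat \<Rightarrow> (nat \<Rightarrow> real) \<Rightarrow> (nat \<Rightarrow> real \<Rightarrow> real^3) \<Rightarrow> bool" where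
  "is_S2_solution n m q \<longleftrightarrow>
     (let vel = (\<lambda>i t. vector_derivative (q i) (at t));
          acc = (\<lambda>i t. vector_derivative (vel i) (at t)) in
      (\<forall>i<n. \<forall>t. (q i has_vector_derivative vel i t) (at t)
                 \<and> (vel i has_vector_derivative acc i t) (at t)) \<and>
      (\<forall>t. \<forall>i<n. \<forall>j<n. i \<noteq> j \<longrightarrow> (q i t \<bullet> q j t)\<^sup>2 \<noteq> 1) \<and>
      (\<forall>t. \<forall>i<n. q i t \<bullet> q i t = 1 \<and> q i t \<bullet> vel i t = 0 \<and>
              acc i t = S2_accel n m (\<lambda>k. q k t) (\<lambda>k. vel k t) i))"

text \<open>The elliptic relative equilibrium of the paper (bodies 1,2,3 are indices 0,1,2).\<close>
definition ere3 :: "real \<Rightarrow> real \<Rightarrow> nat \<Rightarrow> real \<Rightarrow> real^3" where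
  "ere3 z \<omega> i t =
     (let r = sqrt (1 - z\<^sup>2) in
      if i = 0 then vector [0, 0, 1]
      else if i = 1 then vector [r * cos (\<omega> * t), r * sin (\<omega> * t), z]
      else vector [- r * cos (\<omega> * t), - r * sin (\<omega> * t), z])"

end

theory Submission
  imports Defs
begin

(* Every body moves uniformly on a horizontal circle, so its velocity and acceleration are
   explicit and the mutual inner products are constant in time: z between the pole and a ring
   body, 2 z^2 - 1 between the two ring bodies.  Substituting into the equations of motion,
   the pole body is balanced by symmetry and each ring body is balanced as soon as the scalar
   condition ring_balance m z w holds (centripetal acceleration = attraction of the pole plus
   attraction of the opposite ring body). *)

lemma inner_vector3:
  "(vector [a, b, c] :: real^3) \<bullet> vector [d, e, f] = a * d + b * e + c * f"
  by (simp add: inner_vec_def sum_3)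

lemma has_vector_derivative_vector3:
  assumes "(f has_real_derivative f') (at t)" "(g has_real_derivative g') (at t)"
    and "(h has_real_derivative h') (at t)"
  shows "((\<lambda>t. vector [f t, g t, h t] :: real^3) has_vector_derivative vector [f', g', h']) (at t)"
proof -
  have split: "(vector [x, y, u] :: real^3) = x *\<^sub>R axis 1 1 + y *\<^sub>R axis 2 1 + u *\<^sub>R axis 3 1"
    for x y u :: real
    by (simp add: vec_eq_iff forall_3 axis_def)
  show ?thesis
    unfolding split by (auto intro!: derivative_eq_intros assms)
qed

lemma powr_three_halves:
  assumes "(x::real) \<ge> 0"
  shows "x powr (3/2) = x * sqrt x"
proof (cases "x = 0")
  case False
  with assms have "x > 0" by simp
  have "x powr (3/2) = x powr (1 + 1/2)" by simp
  also have "\<dots> = x powr 1 * x powr (1/2)" by (rule powr_add)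
  also have "\<dots> = x * sqrt x" using \<open>x > 0\<close> by (simp add: powr_half_sqrt)
  finally show ?thesis .
qed simp

definition circular_motion :: "real \<Rightarrow> real \<Rightarrow> real \<Rightarrow> real \<Rightarrow> real^3" where
  "circular_motion a c w t = vector [a * cos (w * t), a * sin (w * t), c]"

definition circular_velocity :: "real \<Rightarrow> real \<Rightarrow> real \<Rightarrow> real^3" where
  "circular_velocity a w t = vector [- a * w * sin (w * t), a * w * cos (w * t), 0]"

definition circular_acceleration :: "real \<Rightarrow> real \<Rightarrow> real \<Rightarrow> real^3" where
  "circular_acceleration a w t = vector [- a * w\<^sup>2 * cos (w * t), - a * w\<^sup>2 * sin (w * t), 0]"

lemma circular_motion_has_derivative:
  "(circular_motion a c w has_vector_derivative circular_velocity a w t) (at t)"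
  unfolding circular_motion_def[abs_def] circular_velocity_def
  by (intro has_vector_derivative_vector3) (auto intro!: derivative_eq_intros)

lemma circular_velocity_has_derivative:
  "(circular_velocity a w has_vector_derivative circular_acceleration a w t) (at t)"
  unfolding circular_velocity_def[abs_def] circular_acceleration_def
  by (intro has_vector_derivative_vector3) (auto intro!: derivative_eq_intros simp: power2_eq_square)

lemma inner_circular_motion:
  "circular_motion a c w t \<bullet> circular_motion a' c' w t = a * a' + c * c'"
  unfolding circular_motion_def inner_vector3
  using sin_cos_squared_add[of "w * t"] by algebra

lemma inner_circular_motion_velocity:
  "circular_motion a c w t \<bullet> circular_velocity a w t = 0"
  by (simp add: circular_motion_def circular_velocity_def inner_vector3 algebra_simps)

lemma inner_circular_velocity:
  "circular_velocity a w t \<bullet> circular_velocity a w t = a\<^sup>2 * w\<^sup>2"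
  unfolding circular_velocity_def inner_vector3
  using sin_cos_squared_add[of "w * t"] by algebra

definition ere3_amplitude :: "real \<Rightarrow> nat \<Rightarrow> real" where
  "ere3_amplitude z i = (if i = 0 then 0 else if i = 1 then sqrt (1 - z\<^sup>2) else - sqrt (1 - z\<^sup>2))"

definition ere3_height :: "real \<Rightarrow> nat \<Rightarrow> real" where
  "ere3_height z i = (if i = 0 then 1 else z)"

lemma ere3_circular: "ere3 z w i = circular_motion (ere3_amplitude z i) (ere3_height z i) w"
  by (simp add: fun_eq_iff ere3_def circular_motion_def ere3_amplitude_def ere3_height_def Let_def)

lemma ere3_inner:
  assumes "z\<^sup>2 \<le> 1" "i < 3" "j < 3"
  shows "ere3 z w i t \<bullet> ere3 z w j t = (if i = j then 1 else if i = 0 \<or> j = 0 then z else 2 * z\<^sup>2 - 1)"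
proof -
  have "sqrt (1 - z\<^sup>2) * sqrt (1 - z\<^sup>2) = 1 - z\<^sup>2" using assms(1) by simp
  moreover have "i = 0 \<or> i = 1 \<or> i = 2" "j = 0 \<or> j = 1 \<or> j = 2" using assms(2,3) by auto
  ultimately show ?thesis
    unfolding ere3_circular inner_circular_motion ere3_amplitude_def ere3_height_def
    by (auto simp: power2_eq_square)
qed

lemma ere3_has_derivative:
  "(ere3 z w i has_vector_derivative circular_velocity (ere3_amplitude z i) w t) (at t)"
  by (simp add: ere3_circular circular_motion_has_derivative)

lemma ere3_speed:
  assumes "z\<^sup>2 \<le> 1"
  shows "circular_velocity (ere3_amplitude z i) w t \<bullet> circular_velocity (ere3_amplitude z i) w t
           = (if i = 0 then 0 else w\<^sup>2 * (1 - z\<^sup>2))"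
  using assms by (simp add: inner_circular_velocity ere3_amplitude_def)

(* Force balance of a ring body: the condition under which its centripetal acceleration is
   produced by the attraction of the pole (inner product z) and of the opposite ring body
   (inner product 2 z^2 - 1), with the coefficients of the equations of motion. *)
definition ring_balance :: "real \<Rightarrow> real \<Rightarrow> real \<Rightarrow> bool" where
  "ring_balance m z w \<longleftrightarrow>
     w\<^sup>2 * z = m / (1 - z\<^sup>2) powr (3/2) + 2 * z * (m / (1 - (2 * z\<^sup>2 - 1)\<^sup>2) powr (3/2))"

lemma ere3_equations_of_motion:
  fixes z w m :: real
  assumes "z\<^sup>2 \<le> 1" and "i < 3"
    and balance: "ring_balance m z w"
  shows "circular_acceleration (ere3_amplitude z i) w t
           = S2_accel 3 (\<lambda>_. m) (\<lambda>k. ere3 z w k t) (\<lambda>k. circular_velocity (ere3_amplitude z k) w t) i"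
    (is "?motion i")
proof -
  define a where "a = m / (1 - z\<^sup>2) powr (3/2)"
  define b where "b = m / (1 - (2 * z\<^sup>2 - 1)\<^sup>2) powr (3/2)"
  have key: "w\<^sup>2 * z = a + 2 * z * b" using balance by (simp add: ring_balance_def a_def b_def)
  have others: "{..<3::nat} - {k} = (if k = 0 then {1, 2} else if k = 1 then {0, 2} else {0, 1})"
    if "k < 3" for k
    using that by auto
  note forces = S2_accel_def others ere3_inner[OF assms(1)] ere3_speed[OF assms(1)]
    a_def[symmetric] b_def[symmetric]
  note coordinates = ere3_def ere3_amplitude_def circular_acceleration_def Let_def vec_eq_iff forall_3
  have "?motion 0" by (simp add: forces, simp add: coordinates; use key in algebra)
  moreover have "?motion 1" by (simp add: forces, simp add: coordinates; use key in algebra)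
  moreover have "?motion 2" by (simp add: forces, simp add: coordinates; use key in algebra)
  moreover have "i = 0 \<or> i = 1 \<or> i = 2" using \<open>i < 3\<close> by auto
  ultimately show ?thesis by auto
qed

lemma ere3_is_solution:
  fixes z w m :: real
  assumes "z \<noteq> 0" "z\<^sup>2 < 1"
    and balance: "ring_balance m z w"
  shows "is_S2_solution 3 (\<lambda>_. m) (ere3 z w)"
proof -
  have "z\<^sup>2 \<le> 1" using assms(2) by simp
  have ring_not_antipodal: "(2 * z\<^sup>2 - 1)\<^sup>2 \<noteq> 1"
  proof
    assume "(2 * z\<^sup>2 - 1)\<^sup>2 = 1"
    then have "4 * z\<^sup>2 * (z\<^sup>2 - 1) = 0" by (simp add: algebra_simps power2_eq_square)
    with assms(1,2) show False by simp
  qed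
  have nonsingular: "(ere3 z w i t \<bullet> ere3 z w j t)\<^sup>2 \<noteq> 1" if "i < 3" "j < 3" "i \<noteq> j" for i j t
    using that assms(1,2) ring_not_antipodal by (simp add: ere3_inner \<open>z\<^sup>2 \<le> 1\<close>)
  have tangent: "ere3 z w i t \<bullet> circular_velocity (ere3_amplitude z i) w t = 0" for i t
    by (simp add: ere3_circular inner_circular_motion_velocity)
  show ?thesis
    unfolding is_S2_solution_def Let_def
    using nonsingular ere3_inner[OF \<open>z\<^sup>2 \<le> 1\<close>]
      ere3_equations_of_motion[OF \<open>z\<^sup>2 \<le> 1\<close> _ balance, symmetric]
    by (simp add: vector_derivative_at[OF ere3_has_derivative] ere3_has_derivative tangent
        vector_derivative_at[OF circular_velocity_has_derivative] circular_velocity_has_derivative)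
qed

(* The frequency condition of the paper is the force balance: with r = sqrt (1 - z^2) the two
   attraction coefficients are m / r^3 and m / (8 |z|^3 r^3). *)
lemma frequency_condition_balance:
  fixes z w m :: real
  assumes "m > 0" "z \<noteq> 0" "z\<^sup>2 < 1"
    and frequency: "(4 * z + 1 / \<bar>z\<bar>) / (4 * z\<^sup>2 * (1 - z\<^sup>2) powr (3/2)) = w\<^sup>2 / m"
  shows "ring_balance m z w"
proof -
  define r where "r = sqrt (1 - z\<^sup>2)"
  have "r > 0" using assms(3) by (simp add: r_def)
  have r2: "r\<^sup>2 = 1 - z\<^sup>2" using assms(3) by (simp add: r_def)
  have pole_ring: "(1 - z\<^sup>2) powr (3/2) = r ^ 3"
    using assms(3) by (simp add: powr_three_halves r_def power3_eq_cube)
  have "1 - (2 * z\<^sup>2 - 1)\<^sup>2 = 4 * z\<^sup>2 * (1 - z\<^sup>2)"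
    by (simp add: power2_eq_square algebra_simps)
  also have "\<dots> = (2 * \<bar>z\<bar> * r)\<^sup>2"
    by (simp add: power_mult_distrib r2)
  finally have "(1 - (2 * z\<^sup>2 - 1)\<^sup>2) powr (3/2) = (2 * \<bar>z\<bar> * r)\<^sup>2 * sqrt ((2 * \<bar>z\<bar> * r)\<^sup>2)"
    by (simp only: powr_three_halves zero_le_power2)
  also have "\<dots> = (2 * \<bar>z\<bar> * r)\<^sup>2 * (2 * \<bar>z\<bar> * r)"
    using \<open>r > 0\<close> by simp
  also have "\<dots> = 8 * \<bar>z\<bar> ^ 3 * r ^ 3"
    by (simp add: power3_eq_cube power2_eq_square)
  finally have ring_ring: "(1 - (2 * z\<^sup>2 - 1)\<^sup>2) powr (3/2) = 8 * \<bar>z\<bar> ^ 3 * r ^ 3" .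
  have "w\<^sup>2 = m * ((4 * z + 1 / \<bar>z\<bar>) / (4 * z\<^sup>2 * r ^ 3))"
    using frequency assms(1) by (simp add: pole_ring field_simps)
  then show ?thesis
    using assms(2) \<open>r > 0\<close> unfolding ring_balance_def pole_ring ring_ring
    by (cases "z > 0") (simp_all add: field_simps power2_eq_square power3_eq_cube)
qed

(* On the admissible heights the frequency condition can be met: its left-hand side is
   positive (for negative z this needs z > -1/2, so that 1/|z| > -4 z). *)
lemma frequency_condition_positive:
  fixes z :: real
  assumes "z \<in> {-1/2<..<0} \<union> {0<..<1}"
  shows "(4 * z + 1 / \<bar>z\<bar>) / (4 * z\<^sup>2 * (1 - z\<^sup>2) powr (3/2)) > 0"
proof -
  have "4 * z + 1 / \<bar>z\<bar> > 0"
  proof (cases "z < 0")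
    case True
    with assms have "1 / \<bar>z\<bar> > 2" by (simp add: field_simps)
    with assms show ?thesis by auto
  next
    case False
    with assms show ?thesis by (simp add: add_pos_pos)
  qed
  moreover have "z \<noteq> 0" "1 - z\<^sup>2 > 0" using assms by (auto simp: power2_less_1_iff)
  then have "4 * z\<^sup>2 * (1 - z\<^sup>2) powr (3/2) > 0" by simp
  ultimately show ?thesis by simp
qed

theorem mainTheorem11:
  fixes m z :: real
  assumes "m > 0"
    and "z \<in> {-1/2<..<0} \<union> {0<..<1}"
  shows "(\<exists>\<omega>>0. (4*z + 1/\<bar>z\<bar>) / (4 * z\<^sup>2 * (1 - z\<^sup>2) powr (3/2)) = \<omega>\<^sup>2 / m
               \<and> is_S2_solution 3 (\<lambda>_. m) (ere3 z \<omega>))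
       \<and> (\<exists>\<omega><0. (4*z + 1/\<bar>z\<bar>) / (4 * z\<^sup>2 * (1 - z\<^sup>2) powr (3/2)) = \<omega>\<^sup>2 / m
               \<and> is_S2_solution 3 (\<lambda>_. m) (ere3 z \<omega>))"
proof -
  define K where "K = (4*z + 1/\<bar>z\<bar>) / (4 * z\<^sup>2 * (1 - z\<^sup>2) powr (3/2))"
  have "z \<noteq> 0" "z\<^sup>2 < 1" using assms(2) by (auto simp: power2_less_1_iff)
  have "K > 0" unfolding K_def using frequency_condition_positive[OF assms(2)] .
  define w where "w = sqrt (m * K)"
  have "w > 0" using \<open>K > 0\<close> assms(1) by (simp add: w_def)
  have frequency: "K = \<omega>\<^sup>2 / m" if "\<omega>\<^sup>2 = w\<^sup>2" for \<omega>
    using that \<open>K > 0\<close> assms(1) by (simp add: w_def)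
  have solution: "is_S2_solution 3 (\<lambda>_. m) (ere3 z \<omega>)" if "K = \<omega>\<^sup>2 / m" for \<omega>
    using ere3_is_solution[OF \<open>z \<noteq> 0\<close> \<open>z\<^sup>2 < 1\<close>]
      frequency_condition_balance[OF assms(1) \<open>z \<noteq> 0\<close> \<open>z\<^sup>2 < 1\<close>] that
    unfolding K_def by blast
  show ?thesis
    unfolding K_def[symmetric]
    using \<open>w > 0\<close> frequency[of w] frequency[of "- w"] solution
    by (intro conjI exI[of _ w] exI[of _ "- w"]) auto
qed

end
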